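(* Assume all target-SINRs satisfy $\gamma^{\mathrm{tar}}_i>0$. Let $\boldsymbol{\gamma}^\star$ be an optimal solution of the SINR-assignment problem $$\max_{\boldsymbol{\gamma}\in\mathbf{T}_{\boldsymbol{\gamma}}} |\mathcal{A}(\boldsymbol{\gamma})| \quad\text{s.t.}\quad \boldsymbol{\gamma}\in\mathbf{F}_{\boldsymbol{\gamma}}\cap\mathbf{G}_{\boldsymbol{\gamma}}.$$ Then the power vector $\mathbf{p}(\boldsymbol{\gamma}^\star)=(\mathbf{I}-\mathbf{F}(\boldsymbol{\gamma}^\star))^{-1}\mathbf{U}(\boldsymbol{\gamma}^\star)$ is an optimal solution of the power-allocation problem $$\max_{\mathbf{p}} |\mathcal{S}(\mathbf{p})| \quad\text{s.t.}\quad 0\le p_i\le p^{\max}_i\ \forall i\in\mathcal{M},\quad \mathbf{p}\in\mathbf{G}_{\mathbf{p}},$$ and it is a minimal element (componentwise) of the set of optimal solutions of this power-allocation problem, i.e., no other optimal solution $\mathbf{p}'\neq \mathbf{p}(\boldsymbol{\gamma}^\star)$ satisfies $\mathbf{p}'\le \mathbf{p}(\boldsymbol{\gamma}^\star)$ componentwise.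
   Context: Uplink multi-tier cellular model: users $\mathcal{M}=\{1,\dots,M\}$, base stations (BSs) $\mathcal{B}=\{1,\dots,B\}$, priority levels $\mathcal{K}=\{1,\dots,K\}$ ($1$ = highest). User $i$ is served by BS $b_i$; each user belongs to a priority level, and $\mathcal{M}^{\mathcal{K}}_q$ denotes the set of users with priority $q$. Uplink path gains $h_{m,i}>0$ (from user $i$ to BS $m$), noise powers $N_m>0$ at BS $m$, maximum powers $p_i^{\max}>0$. For a power vector $\mathbf{p}\in\mathbb{R}^M$, the SINR of user $i$ is $\gamma_i(\mathbf{p})=\frac{h_{b_i,i}p_i}{\sum_{j\ne i}h_{b_i,j}p_j+N_{b_i}}$. For an SINR vector $\boldsymbol{\gamma}\ge 0$, $\mathbf{p}(\boldsymbol{\gamma})=(\mathbf{I}-\mathbf{F}(\boldsymbol{\gamma}))^{-1}\mathbf{U}(\boldsymbol{\gamma})$ where $U_i=\gamma_iN_{b_i}/h_{b_i,i}$, $F_{ii}=0$, $F_{ij}=\gamma_i h_{b_i,j}/h_{b_i,i}$ for $i\ne j$ (assumed invertible whenever used). $\mathbf{F}_{\boldsymbol{\gamma}}=\{\boldsymbol{\gamma}: 0\le p_i(\boldsymbol{\gamma})\le p_i^{\max}\ \forall i\}$ (feasible SINR vectors). $\mathbf{T}_{\boldsymbol{\gamma}}=\prod_{i\in\mathcal{M}}\{\gamma^{\mathrm{tar}}_i,0\}$. $\mathcal{A}(\boldsymbol{\gamma})=\{i:\gamma_i>0\}$. $\mathcal{S}(\mathbf{p})=\{i:\gamma_i(\mathbf{p})\ge\gamma^{\mathrm{tar}}_i\}$.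 Priority constraint sets: $\mathbf{G}_{\mathbf{p}}$ is the set of $\mathbf{p}$ such that whenever some $i\in\mathcal{M}^{\mathcal{K}}_q$ with $q>1$ has $\gamma_i(\mathbf{p})\ge\gamma^{\mathrm{tar}}_i$, then $\gamma_j(\mathbf{p})\ge\gamma^{\mathrm{tar}}_j$ for all $j\in\mathcal{M}^{\mathcal{K}}_{q'}$, $q'<q$; $\mathbf{G}_{\boldsymbol{\gamma}}$ is defined identically with $\gamma_i$ in place of $\gamma_i(\mathbf{p})$. *)

theory Defs
  imports "HOL-Analysis.Analysis"
begin

text \<open>Users are indexed by a finite type 'm, base stations by a type 'b.
  h b i : path gain from user i to BS b; N b : noise at BS b; serv i : serving BS of user i;
  lev i : priority level of user i (1 = highest); gtar i : target SINR of user i.\<close>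

definition sinr :: "('b \<Rightarrow> 'm::finite \<Rightarrow> real) \<Rightarrow> ('b \<Rightarrow> real) \<Rightarrow> ('m \<Rightarrow> 'b)
    \<Rightarrow> real^'m \<Rightarrow> 'm \<Rightarrow> real" where
  "sinr h N serv p i =
     h (serv i) i * p$i / ((\<Sum>j\<in>UNIV - {i}. h (serv i) j * p$j) + N (serv i))"

definition Uvec :: "('b \<Rightarrow> 'm::finite \<Rightarrow> real) \<Rightarrow> ('b \<Rightarrow> real) \<Rightarrow> ('m \<Rightarrow> 'b)
    \<Rightarrow> real^'m \<Rightarrow> real^'m" where
  "Uvec h N serv g = (\<chi> i. g$i * N (serv i) / h (serv i) i)"

definition Fmat :: "('b \<Rightarrow> 'm::finite \<Rightarrow> real) \<Rightarrow> ('m \<Rightarrow> 'b)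
    \<Rightarrow> real^'m \<Rightarrow> real^'m^'m" where
  "Fmat h serv g = (\<chi> i j. if i = j then 0 else g$i * h (serv i) j / h (serv i) i)"

definition pow_of :: "('b \<Rightarrow> 'm::finite \<Rightarrow> real) \<Rightarrow> ('b \<Rightarrow> real) \<Rightarrow> ('m \<Rightarrow> 'b)
    \<Rightarrow> real^'m \<Rightarrow> real^'m" where
  "pow_of h N serv g = matrix_inv (mat 1 - Fmat h serv g) *v Uvec h N serv g"

definition feasible_sinr :: "('b \<Rightarrow> 'm::finite \<Rightarrow> real) \<Rightarrow> ('b \<Rightarrow> real) \<Rightarrow> ('m \<Rightarrow> 'b)
    \<Rightarrow> ('m \<Rightarrow> real) \<Rightarrow> (real^'m) set" where
  "feasible_sinr h N serv pmax = {g. invertible (mat 1 - Fmat h serv g) \<and>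
      (\<forall>i. 0 \<le> pow_of h N serv g $ i \<and> pow_of h N serv g $ i \<le> pmax i)}"

definition target_set :: "('m::finite \<Rightarrow> real) \<Rightarrow> (real^'m) set" where
  "target_set gtar = {g. \<forall>i. g$i = gtar i \<or> g$i = 0}"

definition active :: "real^'m::finite \<Rightarrow> 'm set" where
  "active g = {i. g$i > 0}"

definition succ_set :: "('b \<Rightarrow> 'm::finite \<Rightarrow> real) \<Rightarrow> ('b \<Rightarrow> real) \<Rightarrow> ('m \<Rightarrow> 'b)
    \<Rightarrow> ('m \<Rightarrow> real) \<Rightarrow> real^'m \<Rightarrow> 'm set" where
  "succ_set h N serv gtar p = {i. sinr h N serv p i \<ge> gtar i}"

definition G_sinr :: "('m::finite \<Rightarrow> nat) \<Rightarrow> ('m \<Rightarrow> real) \<Rightarrow> (real^'m) set" where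
  "G_sinr lev gtar = {g. \<forall>i. lev i > 1 \<and> g$i \<ge> gtar i \<longrightarrow>
      (\<forall>j. lev j < lev i \<longrightarrow> g$j \<ge> gtar j)}"

definition G_pow :: "('b \<Rightarrow> 'm::finite \<Rightarrow> real) \<Rightarrow> ('b \<Rightarrow> real) \<Rightarrow> ('m \<Rightarrow> 'b)
    \<Rightarrow> ('m \<Rightarrow> nat) \<Rightarrow> ('m \<Rightarrow> real) \<Rightarrow> (real^'m) set" where
  "G_pow h N serv lev gtar = {p. \<forall>i. lev i > 1 \<and> sinr h N serv p i \<ge> gtar i \<longrightarrow>
      (\<forall>j. lev j < lev i \<longrightarrow> sinr h N serv p j \<ge> gtar j)}"

definition pow_feasible :: "('b \<Rightarrow> 'm::finite \<Rightarrow> real) \<Rightarrow> ('b \<Rightarrow> real) \<Rightarrow> ('m \<Rightarrow> 'b)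
    \<Rightarrow> ('m \<Rightarrow> nat) \<Rightarrow> ('m \<Rightarrow> real) \<Rightarrow> ('m \<Rightarrow> real) \<Rightarrow> (real^'m) set" where
  "pow_feasible h N serv lev gtar pmax =
     {p. (\<forall>i. 0 \<le> p$i \<and> p$i \<le> pmax i) \<and> p \<in> G_pow h N serv lev gtar}"

definition pow_optimal :: "('b \<Rightarrow> 'm::finite \<Rightarrow> real) \<Rightarrow> ('b \<Rightarrow> real) \<Rightarrow> ('m \<Rightarrow> 'b)
    \<Rightarrow> ('m \<Rightarrow> nat) \<Rightarrow> ('m \<Rightarrow> real) \<Rightarrow> ('m \<Rightarrow> real) \<Rightarrow> (real^'m) set" where
  "pow_optimal h N serv lev gtar pmax =
     {p. p \<in> pow_feasible h N serv lev gtar pmax \<and>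
        (\<forall>q \<in> pow_feasible h N serv lev gtar pmax.
            card (succ_set h N serv gtar q) \<le> card (succ_set h N serv gtar p))}"

definition sinr_optimal :: "('b \<Rightarrow> 'm::finite \<Rightarrow> real) \<Rightarrow> ('b \<Rightarrow> real) \<Rightarrow> ('m \<Rightarrow> 'b)
    \<Rightarrow> ('m \<Rightarrow> nat) \<Rightarrow> ('m \<Rightarrow> real) \<Rightarrow> ('m \<Rightarrow> real) \<Rightarrow> (real^'m) set" where
  "sinr_optimal h N serv lev gtar pmax =
     {g. g \<in> target_set gtar \<and> g \<in> feasible_sinr h N serv pmax \<and> g \<in> G_sinr lev gtar \<and>
        (\<forall>g' \<in> target_set gtar. g' \<in> feasible_sinr h N serv pmax \<and> g' \<in> G_sinr lev gtar
            \<longrightarrow> card (active g') \<le> card (active g))}"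

end

theory Submission
  imports Defs
begin

text \<open>If \<open>\<gamma>\<close> is feasible, the power vector \<open>p(\<gamma>)\<close> attains exactly the SINRs \<open>\<gamma>\<close>, so its
  success set is the active set of \<open>\<gamma>\<close>. Conversely, any feasible power vector \<open>q\<close> meets the
  target SINRs on its success set \<open>S\<close>; the SINR vector that is \<open>\<gamma>\<^sup>t\<^sup>a\<^sup>r\<close> on \<open>S\<close> and \<open>0\<close>
  elsewhere is then feasible, and \<open>p\<close> of it lies below \<open>q\<close>. Both facts rest on a maximum
  principle for the nonnegative matrix \<open>F(\<gamma>)\<close>, for which \<open>q\<close> is a strict supersolution on
  the rows that are not identically zero. Optimality follows by comparing cardinalities, and
  minimality because a smaller optimal \<open>p'\<close> must succeed exactly on the active set of \<open>\<gamma>\<^sup>\<star>\<close>.\<close>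

definition max_principle :: "real^'n::finite^'n \<Rightarrow> bool" where
  "max_principle F \<longleftrightarrow> (\<forall>x. (\<forall>i. x$i \<le> (F *v x)$i) \<longrightarrow> (\<forall>i. x$i \<le> 0))"

lemma max_principleD:
  "max_principle F \<Longrightarrow> (\<And>i. x$i \<le> (F *v x)$i) \<Longrightarrow> x$i \<le> 0"
  unfolding max_principle_def by blast

lemma max_principle_nonneg_matrix:
  fixes F :: "real^'n::finite^'n" and q :: "real^'n"
  assumes F_nonneg: "\<And>i j. 0 \<le> F$i$j"
    and zero_rows: "\<And>i j. i \<notin> S \<Longrightarrow> F$i$j = 0"
    and q_nonneg: "\<And>i. 0 \<le> q$i"
    and q_strict: "\<And>i. i \<in> S \<Longrightarrow> (F *v q)$i < q$i"
  shows "max_principle F"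
  unfolding max_principle_def
proof (intro allI impI)
  fix x :: "real^'n" and i
  assume sub: "\<forall>i. x$i \<le> (F *v x)$i"
  have Fq_nonneg: "0 \<le> (F *v q)$k" for k
    by (simp add: matrix_vector_mult_def sum_nonneg F_nonneg q_nonneg)
  have q_pos: "0 < q$k" if "k \<in> S" for k
    using q_strict[OF that] Fq_nonneg[of k] by linarith
  have outside: "x$k \<le> 0" if "k \<notin> S" for k
    using sub[rule_format, of k] zero_rows[OF that] by (simp add: matrix_vector_mult_def)
  show "x$i \<le> 0"
  proof (rule ccontr)
    assume "\<not> x$i \<le> 0"
    then have "i \<in> S" and xi: "0 < x$i" using outside by force+
    \<comment> \<open>compare \<open>x\<close> with the smallest multiple \<open>t q\<close> dominating it on \<open>S\<close>\<close>
    define t where "t = Max ((\<lambda>k. x$k / q$k) ` S)"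
    have "t \<in> (\<lambda>k. x$k / q$k) ` S" unfolding t_def using \<open>i \<in> S\<close> by (intro Max_in) auto
    then obtain k where "k \<in> S" and t_def': "t = x$k / q$k" by blast
    have "x$i / q$i \<le> t" unfolding t_def using \<open>i \<in> S\<close> by simp
    then have t_pos: "0 < t" using xi q_pos[OF \<open>i \<in> S\<close>] by (smt (verit) divide_pos_pos)
    have dominated: "x$j \<le> t * q$j" for j
    proof (cases "j \<in> S")
      case True
      then have "x$j / q$j \<le> t" unfolding t_def by simp
      then show ?thesis using q_pos[OF True] by (simp add: divide_le_eq mult.commute)
    next
      case False
      then show ?thesis using outside t_pos q_nonneg[of j] by (smt (verit) mult_nonneg_nonneg)
    qed
    have "x$k \<le> (F *v x)$k" using sub by blast
    also have "\<dots> \<le> (F *v (t *\<^sub>R q))$k"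
      unfolding matrix_vector_mult_def
      by (simp add: sum_mono mult_left_mono F_nonneg dominated)
    also have "\<dots> = t * (F *v q)$k" by (simp add: matrix_vector_mult_def sum_distrib_left ac_simps)
    also have "\<dots> < t * q$k" using q_strict[OF \<open>k \<in> S\<close>] t_pos by simp
    also have "\<dots> = x$k" using t_def' q_pos[OF \<open>k \<in> S\<close>] by simp
    finally show False by simp
  qed
qed

lemma matrix_vector_mult_uminus_right:
  fixes A :: "real^'n::finite^'m"
  shows "A *v (- x) = - (A *v x)"
  by (simp add: vec_eq_iff matrix_vector_mult_def sum_negf)

lemma max_principle_invertible:
  fixes F :: "real^'n::finite^'n"
  assumes "max_principle F"
  shows "invertible (mat 1 - F)"
  unfolding invertible_left_inverse matrix_left_invertible_ker
proof (intro allI impI)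
  fix x assume "(mat 1 - F) *v x = 0"
  then have x_fixed: "F *v x = x" by (simp add: matrix_vector_mult_diff_rdistrib)
  have "x$i \<le> 0" for i using max_principleD[OF assms, of x] x_fixed by simp
  moreover have "(-x)$i \<le> 0" for i
    using max_principleD[OF assms, of "-x"] x_fixed by (simp add: matrix_vector_mult_uminus_right)
  ultimately show "x = 0" by (simp add: vec_eq_iff) (meson antisym neg_le_0_iff_le)
qed

lemma max_principle_le_supersolution:
  fixes F :: "real^'n::finite^'n"
  assumes "max_principle F" and "p = F *v p + U" and "\<And>i. (F *v r + U)$i \<le> r$i"
  shows "p$i \<le> r$i"
proof -
  have "(p - r)$i \<le> 0"
  proof (rule max_principleD[OF assms(1)])
    fix i show "(p - r)$i \<le> (F *v (p - r))$i"
      using assms(3)[of i] arg_cong[OF assms(2), of "\<lambda>v. v$i"]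
      by (simp add: matrix_vector_mult_diff_distrib)
  qed
  then show ?thesis by simp
qed

lemma max_principle_nonneg_solution:
  fixes F :: "real^'n::finite^'n"
  assumes "max_principle F" and "p = F *v p + U" and "\<And>i. 0 \<le> U$i"
  shows "0 \<le> p$i"
proof -
  have "(-p)$i \<le> 0"
  proof (rule max_principleD[OF assms(1)])
    fix i show "(-p)$i \<le> (F *v (-p))$i"
      using assms(3)[of i] arg_cong[OF assms(2), of "\<lambda>v. v$i"]
      by (simp add: matrix_vector_mult_uminus_right)
  qed
  then show ?thesis by simp
qed

lemma matrix_inv_right:
  fixes A :: "real^'n::finite^'n"
  assumes "invertible A"
  shows "A ** matrix_inv A = mat 1"
  using someI_ex[OF assms[unfolded invertible_def]] unfolding matrix_inv_def by blast

lemma matrix_inv_id_minus_fixed_point: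
  fixes F :: "real^'n::finite^'n"
  assumes "invertible (mat 1 - F)"
  shows "matrix_inv (mat 1 - F) *v U = F *v (matrix_inv (mat 1 - F) *v U) + U"
proof -
  let ?p = "matrix_inv (mat 1 - F) *v U"
  have "(mat 1 - F) *v ?p = U"
    by (simp add: matrix_vector_mul_assoc matrix_inv_right[OF assms])
  then show ?thesis by (simp add: matrix_vector_mult_diff_rdistrib algebra_simps)
qed

definition interference :: "('b \<Rightarrow> 'm::finite \<Rightarrow> real) \<Rightarrow> ('m \<Rightarrow> 'b) \<Rightarrow> real^'m \<Rightarrow> 'm \<Rightarrow> real" where
  "interference h serv p i = (\<Sum>j\<in>UNIV - {i}. h (serv i) j * p$j)"

lemma sinr_interference:
  "sinr h N serv p i = h (serv i) i * p$i / (interference h serv p i + N (serv i))"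
  unfolding sinr_def interference_def ..

lemma Fmat_Uvec_component:
  "(Fmat h serv g *v p)$i + Uvec h N serv g $ i
     = g$i / h (serv i) i * (interference h serv p i + N (serv i))"
proof -
  have "(Fmat h serv g *v p)$i = g$i / h (serv i) i * interference h serv p i"
    unfolding Fmat_def matrix_vector_mult_def interference_def
    by (subst sum.remove[of UNIV i]) (auto simp: sum_distrib_left intro!: sum.cong)
  then show ?thesis by (simp add: Uvec_def distrib_left)
qed

lemma pow_of_fixed_point:
  "invertible (mat 1 - Fmat h serv g) \<Longrightarrow>
     pow_of h N serv g = Fmat h serv g *v pow_of h N serv g + Uvec h N serv g"
  unfolding pow_of_def by (rule matrix_inv_id_minus_fixed_point)

locale network =
  fixes h :: "'b \<Rightarrow> 'm::finite \<Rightarrow> real" and N :: "'b \<Rightarrow> real" and serv :: "'m \<Rightarrow> 'b"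
  assumes h_pos: "\<And>b i. 0 < h b i" and N_pos: "\<And>b. 0 < N b"
begin

lemma interference_nonneg: "(\<And>j. 0 \<le> p$j) \<Longrightarrow> 0 \<le> interference h serv p i"
  unfolding interference_def using h_pos by (simp add: sum_nonneg less_imp_le)

lemma sinr_nonneg: "(\<And>j. 0 \<le> p$j) \<Longrightarrow> 0 \<le> sinr h N serv p i"
  unfolding sinr_interference
  using interference_nonneg[of p i] h_pos[of "serv i" i] N_pos[of "serv i"] by simp

lemma sinr_eq_if_fixed_point:
  assumes "\<And>j. 0 \<le> p$j" and "p = Fmat h serv g *v p + Uvec h N serv g"
  shows "sinr h N serv p i = g$i"
proof -
  let ?D = "interference h serv p i + N (serv i)"
  have "0 < ?D" using interference_nonneg[OF assms(1), of i] N_pos[of "serv i"] by linarith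
  moreover have "p$i = g$i / h (serv i) i * ?D"
    using arg_cong[OF assms(2), of "\<lambda>v. v$i"] by (simp add: Fmat_Uvec_component)
  ultimately show ?thesis unfolding sinr_interference using h_pos[of "serv i" i] by simp
qed

lemma supersolution_if_sinr_ge:
  assumes "\<And>j. 0 \<le> q$j" and "g$i \<le> sinr h N serv q i"
  shows "(Fmat h serv g *v q + Uvec h N serv g)$i \<le> q$i"
proof -
  let ?D = "interference h serv q i + N (serv i)"
  have "0 < ?D" using interference_nonneg[OF assms(1), of i] N_pos[of "serv i"] by linarith
  then have "g$i * ?D \<le> h (serv i) i * q$i"
    using assms(2) unfolding sinr_interference by (simp add: le_divide_eq)
  then have "g$i / h (serv i) i * ?D \<le> q$i"
    using h_pos[of "serv i" i] by (simp add: pos_divide_le_eq mult.commute)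
  then show ?thesis by (simp only: vector_add_component Fmat_Uvec_component)
qed

text \<open>\<open>q\<close> is a supersolution of \<open>p = F(g) p + U(g)\<close>, strict on the rows with \<open>g\<^sub>i > 0\<close>
  (where \<open>U(g)\<^sub>i > 0\<close>); all other rows of \<open>F(g)\<close> vanish.\<close>
lemma pow_of_le_if_sinr_ge:
  assumes q_nonneg: "\<And>j. 0 \<le> q$j" and g_nonneg: "\<And>j. 0 \<le> g$j"
    and reached: "\<And>j. g$j \<le> sinr h N serv q j"
  shows "invertible (mat 1 - Fmat h serv g)" and "0 \<le> pow_of h N serv g $ i"
    and "pow_of h N serv g $ i \<le> q$i"
proof -
  let ?F = "Fmat h serv g" and ?U = "Uvec h N serv g"
  have super: "(?F *v q + ?U)$j \<le> q$j" for j by (rule supersolution_if_sinr_ge[OF q_nonneg reached])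
  have U_nonneg: "0 \<le> ?U$j" for j
    unfolding Uvec_def using g_nonneg h_pos N_pos by (simp add: less_imp_le)
  have "max_principle ?F"
  proof (rule max_principle_nonneg_matrix[where S = "{j. 0 < g$j}"])
    show "0 \<le> ?F$i$j" for i j unfolding Fmat_def using g_nonneg h_pos by (simp add: less_imp_le)
    show "?F$i$j = 0" if "i \<notin> {j. 0 < g$j}" for i j
      using that g_nonneg[of i] unfolding Fmat_def by simp
    show "(?F *v q)$i < q$i" if "i \<in> {j. 0 < g$j}" for i
      using that super[of i] h_pos[of "serv i" i] N_pos[of "serv i"]
      by (simp add: Uvec_def) (smt (verit) divide_pos_pos mult_pos_pos)
  qed (rule q_nonneg)
  then show inv: "invertible (mat 1 - ?F)" by (rule max_principle_invertible)
  note fixed = pow_of_fixed_point[OF inv]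
  show "0 \<le> pow_of h N serv g $ i"
    by (rule max_principle_nonneg_solution[OF \<open>max_principle ?F\<close> fixed U_nonneg])
  show "pow_of h N serv g $ i \<le> q$i"
    by (rule max_principle_le_supersolution[OF \<open>max_principle ?F\<close> fixed super])
qed

lemma sinr_pow_of:
  assumes "g \<in> feasible_sinr h N serv pmax"
  shows "sinr h N serv (pow_of h N serv g) i = g$i"
  using assms unfolding feasible_sinr_def by (blast intro: sinr_eq_if_fixed_point pow_of_fixed_point)

end

definition succ_sinr :: "('m::finite \<Rightarrow> real) \<Rightarrow> 'm set \<Rightarrow> real^'m" where
  "succ_sinr gtar S = (\<chi> i. if i \<in> S then gtar i else 0)"

lemma target_set_eq_succ_sinr:
  assumes "\<And>i. 0 < gtar i" and "g \<in> target_set gtar"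
  shows "g = succ_sinr gtar (active g)"
proof -
  have "g$i = (if 0 < g$i then gtar i else 0)" for i
    using assms unfolding target_set_def by force
  then show ?thesis by (simp add: vec_eq_iff active_def succ_sinr_def)
qed

lemma succ_sinr_target_set: "succ_sinr gtar S \<in> target_set gtar"
  unfolding target_set_def succ_sinr_def by simp

lemma active_succ_sinr: "(\<And>i. 0 < gtar i) \<Longrightarrow> active (succ_sinr gtar S) = S"
  unfolding active_def succ_sinr_def by auto

context network
begin

lemma succ_sinr_succ_set_feasible:
  assumes gtar_pos: "\<And>i. 0 < gtar i" and q: "q \<in> pow_feasible h N serv lev gtar pmax"
  defines "g \<equiv> succ_sinr gtar (succ_set h N serv gtar q)"
  shows "g \<in> feasible_sinr h N serv pmax" and "g \<in> G_sinr lev gtar"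
    and "\<And>i. pow_of h N serv g $ i \<le> q$i"
proof -
  have q_nonneg: "0 \<le> q$j" and q_le_pmax: "q$j \<le> pmax j" for j
    using q unfolding pow_feasible_def by auto
  have g_nonneg: "0 \<le> g$j" for j unfolding g_def succ_sinr_def using gtar_pos[of j] by simp
  have reached: "g$j \<le> sinr h N serv q j" for j
    unfolding g_def succ_sinr_def succ_set_def using sinr_nonneg[OF q_nonneg] by simp
  note pow = pow_of_le_if_sinr_ge[OF q_nonneg g_nonneg reached]
  show "pow_of h N serv g $ i \<le> q$i" for i by (rule pow(3))
  show "g \<in> feasible_sinr h N serv pmax"
    unfolding feasible_sinr_def using pow(1,2) order_trans[OF pow(3) q_le_pmax] by blast
  have succeeds: "gtar i \<le> g$i \<longleftrightarrow> gtar i \<le> sinr h N serv q i" for i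
    unfolding g_def succ_sinr_def succ_set_def using gtar_pos[of i] by simp
  show "g \<in> G_sinr lev gtar"
    using q unfolding G_sinr_def pow_feasible_def G_pow_def by (simp only: mem_Collect_eq succeeds) blast
qed

lemma pow_of_feasible:
  assumes gtar_pos: "\<And>i. 0 < gtar i" and "g \<in> target_set gtar"
    and feas: "g \<in> feasible_sinr h N serv pmax" and "g \<in> G_sinr lev gtar"
  shows "pow_of h N serv g \<in> pow_feasible h N serv lev gtar pmax"
    and "succ_set h N serv gtar (pow_of h N serv g) = active g"
proof -
  note sinr_eq = sinr_pow_of[OF feas]
  have "pow_of h N serv g \<in> G_pow h N serv lev gtar"
    using \<open>g \<in> G_sinr lev gtar\<close> unfolding G_sinr_def G_pow_def mem_Collect_eq sinr_eq .
  then show "pow_of h N serv g \<in> pow_feasible h N serv lev gtar pmax"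
    using feas unfolding pow_feasible_def feasible_sinr_def by blast
  have "gtar i \<le> g$i \<longleftrightarrow> 0 < g$i" for i
  proof -
    have "g$i = gtar i \<or> g$i = 0" using \<open>g \<in> target_set gtar\<close> unfolding target_set_def by blast
    then show ?thesis using gtar_pos[of i] by auto
  qed
  then show "succ_set h N serv gtar (pow_of h N serv g) = active g"
    unfolding succ_set_def active_def sinr_eq by blast
qed

text \<open>Inactive users get zero power under \<open>p(g)\<close>, so no smaller power vector lets them succeed.\<close>
lemma succ_set_subset_active_if_le_pow_of:
  assumes gtar_pos: "\<And>i. 0 < gtar i" and "g \<in> target_set gtar"
    and feas: "g \<in> feasible_sinr h N serv pmax"
    and p_nonneg: "\<And>i. 0 \<le> p$i" and le: "\<And>i. p$i \<le> pow_of h N serv g $ i"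
  shows "succ_set h N serv gtar p \<subseteq> active g"
proof
  fix i assume succ: "i \<in> succ_set h N serv gtar p"
  show "i \<in> active g"
  proof (rule ccontr)
    assume "i \<notin> active g"
    then have "g$i = 0" using \<open>g \<in> target_set gtar\<close> gtar_pos[of i]
      unfolding target_set_def active_def by force
    moreover have "invertible (mat 1 - Fmat h serv g)" using feas unfolding feasible_sinr_def by blast
    moreover note arg_cong[where f = "\<lambda>v. v$i", OF pow_of_fixed_point[OF this, where N = N]]
    ultimately have "pow_of h N serv g $ i = 0" by (simp add: Fmat_Uvec_component)
    then have "p$i = 0" using le[of i] p_nonneg[of i] by simp
    then show False using succ gtar_pos[of i] unfolding succ_set_def sinr_def by simp
  qed
qed

end

theorem proposition1:
  fixes h :: "'b \<Rightarrow> 'm::finite \<Rightarrow> real"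
    and N :: "'b \<Rightarrow> real"
    and serv :: "'m \<Rightarrow> 'b"
    and lev :: "'m \<Rightarrow> nat"
    and K :: nat
    and gtar pmax :: "'m \<Rightarrow> real"
    and gstar :: "real^'m"
  assumes h_pos: "\<And>b i. h b i > 0"
    and N_pos: "\<And>b. N b > 0"
    and pmax_pos: "\<And>i. pmax i > 0"
    and lev_range: "\<And>i. lev i \<in> {1..K}"
    and gtar_pos: "\<And>i. gtar i > 0"
    and opt: "gstar \<in> sinr_optimal h N serv lev gtar pmax"
  shows "pow_of h N serv gstar \<in> pow_optimal h N serv lev gtar pmax \<and>
    (\<forall>p' \<in> pow_optimal h N serv lev gtar pmax.
        (\<forall>i. p'$i \<le> pow_of h N serv gstar $ i) \<longrightarrow> p' = pow_of h N serv gstar)"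
proof -
  interpret network h N serv using h_pos N_pos by unfold_locales
  let ?p = "pow_of h N serv gstar"
  have target: "gstar \<in> target_set gtar" and feas: "gstar \<in> feasible_sinr h N serv pmax"
    and G: "gstar \<in> G_sinr lev gtar"
    and most_active: "\<And>g. g \<in> target_set gtar \<Longrightarrow> g \<in> feasible_sinr h N serv pmax \<Longrightarrow>
      g \<in> G_sinr lev gtar \<Longrightarrow> card (active g) \<le> card (active gstar)"
    using opt unfolding sinr_optimal_def by auto
  note p_feas = pow_of_feasible[OF gtar_pos target feas G]
  have card_le: "card (succ_set h N serv gtar q) \<le> card (active gstar)"
    if "q \<in> pow_feasible h N serv lev gtar pmax" for q
    using most_active[OF succ_sinr_target_set succ_sinr_succ_set_feasible(1,2)[OF gtar_pos that]]
    by (simp add: active_succ_sinr[OF gtar_pos])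
  have "?p \<in> pow_optimal h N serv lev gtar pmax"
    unfolding pow_optimal_def using p_feas card_le by simp
  moreover have "p' = ?p" if p'_opt: "p' \<in> pow_optimal h N serv lev gtar pmax"
    and le: "\<forall>i. p'$i \<le> ?p$i" for p'
  proof -
    have p'_feas: "p' \<in> pow_feasible h N serv lev gtar pmax"
      and "card (active gstar) \<le> card (succ_set h N serv gtar p')"
      using p'_opt p_feas unfolding pow_optimal_def by auto
    moreover have "succ_set h N serv gtar p' \<subseteq> active gstar"
      using p'_feas le unfolding pow_feasible_def
      by (intro succ_set_subset_active_if_le_pow_of[OF gtar_pos target feas]) auto
    ultimately have "succ_set h N serv gtar p' = active gstar"
      by (intro card_seteq) auto
    then have "succ_sinr gtar (succ_set h N serv gtar p') = gstar"
      using target_set_eq_succ_sinr[OF gtar_pos target, symmetric] by simp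
    then have "?p$i \<le> p'$i" for i
      using succ_sinr_succ_set_feasible(3)[OF gtar_pos p'_feas, of i] by simp
    then show ?thesis using le by (simp add: vec_eq_iff antisym)
  qed
  ultimately show ?thesis by blast
qed

end
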